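(* Let $(\Lambda,d)$ be a $k$-graph and let $p\in\mathbb{N}^k$ with $p_i\ge1$ for $1\le i\le k$. Then the coordinate matrices $M^{p\Lambda}_1,\dots,M^{p\Lambda}_k$ of the dual $k$-graph $p\Lambda$ have all entries in $\{0,1\}$.
   Context: A $k$-graph is a pair $(\Lambda,d)$ where $\Lambda$ is a countable category and $d:\Lambda\to\mathbb{N}^k$ is a functor satisfying the factorisation property: if $d(\lambda)=m+n$ then there are unique $\mu\in d^{-1}(m)$, $\nu\in d^{-1}(n)$ with $\lambda=\mu\nu$. Vertices are identified with paths of degree $0$; $r,s$ are codomain and domain; $\Lambda^n:=d^{-1}(n)$; $e_1,\dots,e_k$ are the standard generators of $\mathbb{N}^k$. The coordinate matrices of a $k$-graph $\Gamma$ are the matrices $M^\Gamma_i$ ($1\le i\le k$) indexed by $\Gamma^0\times\Gamma^0$ with $(M^\Gamma_i)_{v,w}:=|\{\lambda\in\Gamma^{e_i}: r(\lambda)=w,\ s(\lambda)=v\}|$. For $d(\lambda)=n$ and $l\le m\le n$, $\lambda(l,m)$ is the unique path of degree $m-l$ with $\lambda=\lambda(0,l)\lambda(l,m)\lambda(m,n)$. The dual $k$-graph $p\Lambda$ has paths $\{\lambda:d(\lambda)\ge p\}$, vertices $\Lambda^p$, range $r_p(\lambda)=\lambda(0,p)$, source $s_p(\lambda)=\lambda(d(\lambda)-p,d(\lambda))$, composition $\lambda\circ_p\mu=\lambda\,\mu(p,d(\mu))$ when $s_p(\lambda)=r_p(\mu)$, degree $d_p(\lambda)=d(\lambda)-p$.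 *)

theory Defs
  imports Main "HOL-Library.Countable_Set" "HOL-Library.Extended_Nat"
begin

text \<open>Degrees in N^k are modelled as functions nat => nat supported on {0..<k}
  (coordinate j < k corresponds to the paper's coordinate j+1).  Addition and
  the partial order are pointwise.\<close>

definition in_Nk :: "nat \<Rightarrow> (nat \<Rightarrow> nat) \<Rightarrow> bool" where
  "in_Nk k m \<longleftrightarrow> (\<forall>j\<ge>k. m j = 0)"

definition deg_add :: "(nat \<Rightarrow> nat) \<Rightarrow> (nat \<Rightarrow> nat) \<Rightarrow> nat \<Rightarrow> nat" where
  "deg_add m n = (\<lambda>j. m j + n j)"

definition deg_sub :: "(nat \<Rightarrow> nat) \<Rightarrow> (nat \<Rightarrow> nat) \<Rightarrow> nat \<Rightarrow> nat" where
  "deg_sub m n = (\<lambda>j. m j - n j)"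

definition deg_zero :: "nat \<Rightarrow> nat" where
  "deg_zero = (\<lambda>j. 0)"

definition unit_deg :: "nat \<Rightarrow> nat \<Rightarrow> nat" where
  "unit_deg i = (\<lambda>j. if j = i then 1 else 0)"

text \<open>A k-graph: a countable category whose morphisms form the set L; objects are
  identified with identity morphisms, r and s give range/codomain and source/domain
  (as identity morphisms), cmp l m is the composite l m (defined when s l = r m),
  and d is a functor to N^k with the (unique) factorisation property.\<close>
definition kgraph ::
  "nat \<Rightarrow> 'a set \<Rightarrow> ('a \<Rightarrow> 'a) \<Rightarrow> ('a \<Rightarrow> 'a) \<Rightarrow> ('a \<Rightarrow> 'a \<Rightarrow> 'a) \<Rightarrow> ('a \<Rightarrow> nat \<Rightarrow> nat) \<Rightarrow> bool"
where
  "kgraph k L r s cmp d \<longleftrightarrow>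
     countable L \<and>
     \<comment> \<open>category structure\<close>
     (\<forall>l\<in>L. r l \<in> L \<and> s l \<in> L) \<and>
     (\<forall>l\<in>L. r (r l) = r l \<and> s (r l) = r l \<and> r (s l) = s l \<and> s (s l) = s l) \<and>
     (\<forall>l\<in>L. cmp (r l) l = l \<and> cmp l (s l) = l) \<and>
     (\<forall>l\<in>L. \<forall>m\<in>L. s l = r m \<longrightarrow>
         cmp l m \<in> L \<and> r (cmp l m) = r l \<and> s (cmp l m) = s m) \<and>
     (\<forall>l\<in>L. \<forall>m\<in>L. \<forall>n\<in>L. s l = r m \<longrightarrow> s m = r n \<longrightarrow>
         cmp (cmp l m) n = cmp l (cmp m n)) \<and>
     \<comment> \<open>degree functor into N^k\<close>
     (\<forall>l\<in>L. in_Nk k (d l)) \<and>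
     (\<forall>l\<in>L. \<forall>m\<in>L. s l = r m \<longrightarrow> d (cmp l m) = deg_add (d l) (d m)) \<and>
     \<comment> \<open>factorisation property\<close>
     (\<forall>l\<in>L. \<forall>m n. d l = deg_add m n \<longrightarrow>
         (\<exists>!(a, b). a \<in> L \<and> b \<in> L \<and> d a = m \<and> d b = n \<and> s a = r b \<and> l = cmp a b))"

text \<open>The segment lambda(l,m), for l <= m <= d(lambda): the unique path of degree m - l with
  lambda = lambda(0,l) lambda(l,m) lambda(m,d(lambda)).\<close>
definition seg ::
  "'a set \<Rightarrow> ('a \<Rightarrow> 'a) \<Rightarrow> ('a \<Rightarrow> 'a) \<Rightarrow> ('a \<Rightarrow> 'a \<Rightarrow> 'a) \<Rightarrow> ('a \<Rightarrow> nat \<Rightarrow> nat)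
     \<Rightarrow> 'a \<Rightarrow> (nat \<Rightarrow> nat) \<Rightarrow> (nat \<Rightarrow> nat) \<Rightarrow> 'a"
where
  "seg L r s cmp d lam l m = (THE b. \<exists>a c. a \<in> L \<and> b \<in> L \<and> c \<in> L \<and>
      d a = l \<and> d b = deg_sub m l \<and> d c = deg_sub (d lam) m \<and>
      s a = r b \<and> s b = r c \<and> lam = cmp (cmp a b) c)"

definition coord_matrix ::
  "'a set \<Rightarrow> ('a \<Rightarrow> 'a) \<Rightarrow> ('a \<Rightarrow> 'a) \<Rightarrow> ('a \<Rightarrow> nat \<Rightarrow> nat) \<Rightarrow> nat \<Rightarrow> 'a \<Rightarrow> 'a \<Rightarrow> enat"
where
  "coord_matrix G r s d i v w =
     (let S = {l \<in> G. d l = unit_deg i \<and> r l = w \<and> s l = v}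
      in if finite S then enat (card S) else \<infinity>)"

definition kverts :: "'a set \<Rightarrow> ('a \<Rightarrow> nat \<Rightarrow> nat) \<Rightarrow> 'a set" where
  "kverts G d = {l \<in> G. d l = deg_zero}"

definition dual_paths :: "'a set \<Rightarrow> ('a \<Rightarrow> nat \<Rightarrow> nat) \<Rightarrow> (nat \<Rightarrow> nat) \<Rightarrow> 'a set" where
  "dual_paths L d p = {l \<in> L. p \<le> d l}"

definition dual_r ::
  "'a set \<Rightarrow> ('a \<Rightarrow> 'a) \<Rightarrow> ('a \<Rightarrow> 'a) \<Rightarrow> ('a \<Rightarrow> 'a \<Rightarrow> 'a) \<Rightarrow> ('a \<Rightarrow> nat \<Rightarrow> nat)
     \<Rightarrow> (nat \<Rightarrow> nat) \<Rightarrow> 'a \<Rightarrow> 'a" where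
  "dual_r L r s cmp d p lam = seg L r s cmp d lam deg_zero p"

definition dual_s ::
  "'a set \<Rightarrow> ('a \<Rightarrow> 'a) \<Rightarrow> ('a \<Rightarrow> 'a) \<Rightarrow> ('a \<Rightarrow> 'a \<Rightarrow> 'a) \<Rightarrow> ('a \<Rightarrow> nat \<Rightarrow> nat)
     \<Rightarrow> (nat \<Rightarrow> nat) \<Rightarrow> 'a \<Rightarrow> 'a" where
  "dual_s L r s cmp d p lam = seg L r s cmp d lam (deg_sub (d lam) p) (d lam)"

definition dual_comp ::
  "'a set \<Rightarrow> ('a \<Rightarrow> 'a) \<Rightarrow> ('a \<Rightarrow> 'a) \<Rightarrow> ('a \<Rightarrow> 'a \<Rightarrow> 'a) \<Rightarrow> ('a \<Rightarrow> nat \<Rightarrow> nat)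
     \<Rightarrow> (nat \<Rightarrow> nat) \<Rightarrow> 'a \<Rightarrow> 'a \<Rightarrow> 'a" where
  "dual_comp L r s cmp d p lam mu = cmp lam (seg L r s cmp d mu p (d mu))"

definition dual_d :: "('a \<Rightarrow> nat \<Rightarrow> nat) \<Rightarrow> (nat \<Rightarrow> nat) \<Rightarrow> 'a \<Rightarrow> nat \<Rightarrow> nat" where
  "dual_d d p lam = deg_sub (d lam) p"

end

theory Submission
  imports Defs
begin

text \<open>An edge \<lambda> of colour i in p\<Lambda> with r_p(\<lambda>) = w and s_p(\<lambda>) = v is a path of degree
  e_i + p with \<lambda>(0,p) = w and \<lambda>(e_i, e_i + p) = v.  Since e_i \<le> p, the initial segment
  \<lambda>(0,e_i) is also w(0,e_i), so \<lambda> = w(0,e_i) v is determined by v and w.\<close>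

lemma deg_add_eq_left_iff: "deg_add m n = m \<longleftrightarrow> n = deg_zero"
  and deg_add_eq_right_iff: "deg_add m n = n \<longleftrightarrow> m = deg_zero"
  by (auto simp: deg_add_def deg_zero_def fun_eq_iff)

lemma deg_add_sub_cancel: "m \<le> n \<Longrightarrow> deg_add m (deg_sub n m) = n"
  by (simp add: deg_add_def deg_sub_def le_fun_def fun_eq_iff)

lemma deg_sub_add_cancel: "m \<le> n \<Longrightarrow> deg_add (deg_sub n m) m = n"
  by (simp add: deg_add_def deg_sub_def le_fun_def fun_eq_iff)

locale k_graph =
  fixes k :: nat and L :: "'a set" and r s :: "'a \<Rightarrow> 'a"
    and cmp :: "'a \<Rightarrow> 'a \<Rightarrow> 'a" and d :: "'a \<Rightarrow> nat \<Rightarrow> nat"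
  assumes kgraph: "kgraph k L r s cmp d"
begin

lemma range_in: "l \<in> L \<Longrightarrow> r l \<in> L"
  and source_in: "l \<in> L \<Longrightarrow> s l \<in> L"
  and source_range: "l \<in> L \<Longrightarrow> s (r l) = r l"
  and range_source: "l \<in> L \<Longrightarrow> r (s l) = s l"
  and comp_range_left: "l \<in> L \<Longrightarrow> cmp (r l) l = l"
  and comp_source_right: "l \<in> L \<Longrightarrow> cmp l (s l) = l"
  using kgraph unfolding kgraph_def by simp_all

lemma comp_in: "l \<in> L \<Longrightarrow> m \<in> L \<Longrightarrow> s l = r m \<Longrightarrow> cmp l m \<in> L"
  and range_comp: "l \<in> L \<Longrightarrow> m \<in> L \<Longrightarrow> s l = r m \<Longrightarrow> r (cmp l m) = r l"
  and source_comp: "l \<in> L \<Longrightarrow> m \<in> L \<Longrightarrow> s l = r m \<Longrightarrow> s (cmp l m) = s m"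
  and degree_comp: "l \<in> L \<Longrightarrow> m \<in> L \<Longrightarrow> s l = r m \<Longrightarrow> d (cmp l m) = deg_add (d l) (d m)"
  using kgraph unfolding kgraph_def by simp_all

lemma comp_assoc:
  "\<lbrakk>l \<in> L; m \<in> L; n \<in> L; s l = r m; s m = r n\<rbrakk> \<Longrightarrow> cmp (cmp l m) n = cmp l (cmp m n)"
  using kgraph unfolding kgraph_def by simp

lemma factorisation:
  assumes "l \<in> L" "d l = deg_add m n"
  shows "\<exists>!(a, b). a \<in> L \<and> b \<in> L \<and> d a = m \<and> d b = n \<and> s a = r b \<and> l = cmp a b"
proof -
  have "\<forall>l\<in>L. \<forall>m n. d l = deg_add m n \<longrightarrow>
      (\<exists>!(a, b). a \<in> L \<and> b \<in> L \<and> d a = m \<and> d b = n \<and> s a = r b \<and> l = cmp a b)"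
    using kgraph unfolding kgraph_def by (elim conjE) assumption
  then show ?thesis using assms by blast
qed

lemma factor_exists:
  assumes "l \<in> L" "d l = deg_add m n"
  obtains a b where "a \<in> L" "b \<in> L" "d a = m" "d b = n" "s a = r b" "l = cmp a b"
  using factorisation[OF assms] by blast

lemma factor_unique:
  assumes "a \<in> L" "b \<in> L" "s a = r b" "a' \<in> L" "b' \<in> L" "s a' = r b'"
    and "d a = d a'" "d b = d b'" "cmp a b = cmp a' b'"
  shows "a = a'" "b = b'"
proof -
  have "d (cmp a b) = deg_add (d a) (d b)"
    using assms(1-3) by (rule degree_comp)
  with assms(1,2) have "\<exists>!(x, y). x \<in> L \<and> y \<in> L \<and> d x = d a \<and> d y = d b \<and> s x = r y \<and> cmp a b = cmp x y"
    by (intro factorisation comp_in assms(3))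
  then have "(a, b) = (a', b')"
    by (rule ex1E) (use assms in auto)
  then show "a = a'" "b = b'" by simp_all
qed

lemma degree_source:
  assumes "l \<in> L"
  shows "d (s l) = deg_zero"
proof -
  have "deg_add (d l) (d (s l)) = d (cmp l (s l))"
    using degree_comp[OF assms source_in[OF assms] range_source[OF assms, symmetric]] by (rule sym)
  also have "\<dots> = d l"
    using comp_source_right[OF assms] by (rule arg_cong)
  finally show ?thesis by (simp only: deg_add_eq_left_iff)
qed

lemma degree_range:
  assumes "l \<in> L"
  shows "d (r l) = deg_zero"
proof -
  have "deg_add (d (r l)) (d l) = d (cmp (r l) l)"
    using degree_comp[OF range_in[OF assms] assms source_range[OF assms]] by (rule sym)
  also have "\<dots> = d l"
    using comp_range_left[OF assms] by (rule arg_cong)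
  finally show ?thesis by (simp only: deg_add_eq_right_iff)
qed

lemma seg_eqI:
  assumes "a \<in> L" "b \<in> L" "c \<in> L" "s a = r b" "s b = r c" "lam = cmp (cmp a b) c"
    and "d a = l" "d b = deg_sub m l" "d c = deg_sub (d lam) m"
  shows "seg L r s cmp d lam l m = b"
  unfolding seg_def
proof (rule the_equality)
  show "\<exists>a c. a \<in> L \<and> b \<in> L \<and> c \<in> L \<and> d a = l \<and> d b = deg_sub m l \<and>
      d c = deg_sub (d lam) m \<and> s a = r b \<and> s b = r c \<and> lam = cmp (cmp a b) c"
    using assms by blast
next
  fix b' assume "\<exists>a' c'. a' \<in> L \<and> b' \<in> L \<and> c' \<in> L \<and> d a' = l \<and> d b' = deg_sub m l \<and>
      d c' = deg_sub (d lam) m \<and> s a' = r b' \<and> s b' = r c' \<and> lam = cmp (cmp a' b') c'"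
  then obtain a' c' where a'c': "a' \<in> L" "b' \<in> L" "c' \<in> L" "d a' = l" "d b' = deg_sub m l"
      "d c' = deg_sub (d lam) m" "s a' = r b'" "s b' = r c'" "lam = cmp (cmp a' b') c'"
    by blast
  have ab: "cmp a b \<in> L" "s (cmp a b) = r c" "d (cmp a b) = deg_add l (deg_sub m l)"
    using assms by (simp_all add: comp_in source_comp degree_comp)
  have a'b': "cmp a' b' \<in> L" "s (cmp a' b') = r c'" "d (cmp a' b') = deg_add l (deg_sub m l)"
    using a'c' by (simp_all add: comp_in source_comp degree_comp)
  have "cmp a' b' = cmp a b"
    using a'b' ab a'c'(3,6,9) assms(3,6,9) by (intro factor_unique(1)[of "cmp a' b'" c' "cmp a b" c]) simp_all
  then show "b' = b"
    using a'c'(1,2,4,5,7) assms(1,2,4,7,8) by (intro factor_unique(2)[of a' b' a b]) simp_all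
qed

lemma seg_tail:
  assumes "x \<in> L" "y \<in> L" "s x = r y"
  shows "seg L r s cmp d (cmp x y) (d x) (d (cmp x y)) = y"
proof (rule seg_eqI[where a = x and c = "s y"])
  show "cmp x y = cmp (cmp x y) (s y)"
    using comp_source_right[OF comp_in[OF assms]] source_comp[OF assms] by simp
next
  show "d y = deg_sub (d (cmp x y)) (d x)" "d (s y) = deg_sub (d (cmp x y)) (d (cmp x y))"
    using assms by (simp_all add: degree_comp degree_source deg_add_def deg_sub_def deg_zero_def)
qed (use assms in \<open>simp_all add: source_in range_source\<close>)

lemma seg_head:
  assumes "x \<in> L" "y \<in> L" "s x = r y"
  shows "seg L r s cmp d (cmp x y) deg_zero (d x) = x"
  using assms
  by (intro seg_eqI[where a = "r x" and c = y])
     (simp_all add: range_in source_range comp_range_left degree_range degree_comp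
       deg_add_def deg_sub_def deg_zero_def)

lemma path_eq_if_head_tail_eq:
  assumes "lam \<in> L" "lam' \<in> L" "d lam = deg_add q p" "d lam' = deg_add q p" "q \<le> p"
    and head: "seg L r s cmp d lam deg_zero p = seg L r s cmp d lam' deg_zero p"
    and tail: "seg L r s cmp d lam q (d lam) = seg L r s cmp d lam' q (d lam')"
  shows "lam = lam'"
proof -
  obtain x y where xy: "x \<in> L" "y \<in> L" "d x = q" "d y = p" "s x = r y" "lam = cmp x y"
    using assms(1,3) by (rule factor_exists)
  obtain x' y' where x'y': "x' \<in> L" "y' \<in> L" "d x' = q" "d y' = p" "s x' = r y'" "lam' = cmp x' y'"
    using assms(2,4) by (rule factor_exists)
  have "y' = y"
    using tail seg_tail[OF xy(1,2,5)] seg_tail[OF x'y'(1,2,5)] xy(3,6) x'y'(3,6) by simp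
  have "d y = deg_add (deg_sub p q) q"
    using xy(4) deg_sub_add_cancel[OF \<open>q \<le> p\<close>] by simp
  then obtain t c where tc: "t \<in> L" "c \<in> L" "d t = deg_sub p q" "d c = q" "s t = r c" "y = cmp t c"
    using xy(2) factor_exists by blast
  have r_y: "r y = r t"
    using tc range_comp by simp
  have head_eq: "seg L r s cmp d (cmp u y) deg_zero p = cmp u t"
    if u: "u \<in> L" "d u = q" "s u = r y" for u
  proof -
    have ut: "s u = r t"
      using u(3) r_y by simp
    have "cmp u y = cmp (cmp u t) c"
      using comp_assoc[OF u(1) tc(1,2) ut tc(5)] tc(6) by simp
    moreover have "d (cmp u t) = p"
      using degree_comp[OF u(1) tc(1) ut] u(2) tc(3) deg_add_sub_cancel[OF \<open>q \<le> p\<close>] by simp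
    ultimately show ?thesis
      using seg_head[OF comp_in[OF u(1) tc(1) ut] tc(2)] source_comp[OF u(1) tc(1) ut] tc(5) by simp
  qed
  have "cmp x t = cmp x' t"
    using head head_eq[OF xy(1,3,5)] head_eq[OF x'y'(1,3)] x'y'(5) xy(6) x'y'(6) \<open>y' = y\<close> by simp
  then have "x = x'"
    using xy(1,3) x'y'(1,3) tc(1) xy(5) x'y'(5) r_y \<open>y' = y\<close> by (intro factor_unique(1)[of x t x' t]) simp_all
  then show ?thesis
    using xy(6) x'y'(6) \<open>y' = y\<close> by simp
qed

end

lemma coord_matrix_zero_or_one:
  assumes "\<And>l l'. \<lbrakk>l \<in> G; d l = unit_deg i; r l = w; s l = v;
      l' \<in> G; d l' = unit_deg i; r l' = w; s l' = v\<rbrakk> \<Longrightarrow> l = l'"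
  shows "coord_matrix G r s d i v w \<in> {0, 1}"
proof -
  let ?S = "{l \<in> G. d l = unit_deg i \<and> r l = w \<and> s l = v}"
  consider "?S = {}" | l where "?S = {l}"
    using assms by blast
  then show ?thesis
  proof cases
    case 1
    show ?thesis unfolding coord_matrix_def Let_def 1 by (simp add: zero_enat_def)
  next
    case (2 l)
    show ?thesis unfolding coord_matrix_def Let_def 2 by (simp add: one_enat_def)
  qed
qed

lemma degree_of_dual_path:
  "l \<in> dual_paths L d p \<Longrightarrow> d l = deg_add (dual_d d p l) p"
  by (simp add: dual_paths_def dual_d_def deg_sub_add_cancel)

theorem corollary3p9:
  fixes k :: nat and L :: "'a set" and r s :: "'a \<Rightarrow> 'a"
    and cmp :: "'a \<Rightarrow> 'a \<Rightarrow> 'a" and d :: "'a \<Rightarrow> nat \<Rightarrow> nat" and p :: "nat \<Rightarrow> nat"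
  assumes "kgraph k L r s cmp d"
    and "in_Nk k p"
    and "\<forall>j<k. 1 \<le> p j"
    and "i < k"
    and "v \<in> kverts (dual_paths L d p) (dual_d d p)"
    and "w \<in> kverts (dual_paths L d p) (dual_d d p)"
  shows "coord_matrix (dual_paths L d p) (dual_r L r s cmp d p) (dual_s L r s cmp d p)
           (dual_d d p) i v w \<in> {0, 1}"
proof (rule coord_matrix_zero_or_one)
  interpret k_graph k L r s cmp d
    using assms(1) by unfold_locales
  have "unit_deg i \<le> p"
    using assms(3,4) by (simp add: unit_deg_def le_fun_def)
  fix l l'
  assume l: "l \<in> dual_paths L d p" "dual_d d p l = unit_deg i"
    "dual_r L r s cmp d p l = w" "dual_s L r s cmp d p l = v"
    and l': "l' \<in> dual_paths L d p" "dual_d d p l' = unit_deg i"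
    "dual_r L r s cmp d p l' = w" "dual_s L r s cmp d p l' = v"
  have "l \<in> L" "l' \<in> L"
    using l(1) l'(1) by (simp_all add: dual_paths_def)
  moreover have "d l = deg_add (unit_deg i) p" "d l' = deg_add (unit_deg i) p"
    using degree_of_dual_path[OF l(1)] degree_of_dual_path[OF l'(1)] l(2) l'(2) by simp_all
  moreover note \<open>unit_deg i \<le> p\<close>
  moreover have "seg L r s cmp d l deg_zero p = seg L r s cmp d l' deg_zero p"
    using l(3) l'(3) by (simp add: dual_r_def)
  moreover have "seg L r s cmp d l (unit_deg i) (d l) = seg L r s cmp d l' (unit_deg i) (d l')"
    using l(2,4) l'(2,4) by (simp add: dual_s_def dual_d_def)
  ultimately show "l = l'"
    by (rule path_eq_if_head_tail_eq)
qed

end
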